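(* Let $V\subseteq R_d$ be a Gotzmann monomial vector space with $x_i$-decomposition $V=V_0\oplus x_iV_1$ and $x_i$-compression $L=L_0\oplus x_iL_1$. If $\mathbf n_1L_1\subseteq L_0$, then for every monomial $m\in V$ divisible by $x_i$ and every variable $x_j$ not dividing $m$, the monomial $\frac{x_j}{x_i}m$ lies in $V$.
   Context: Let $\Bbbk$ be a field, $R=\Bbbk[x_1,\dots,x_n]/(x_1^2,\dots,x_n^2)$, $R_d$ its degree-$d$ component. A monomial vector space is a subspace of some $R_d$ spanned by monomials; $\mathbf m_1V$ is the span of $\{x_jm\}$ over monomials $m\in V$ and all $j$. A subspace $V\subseteq R_d$ is Gotzmann if $|\mathbf m_1V|\le|\mathbf m_1W|$ for every subspace $W\subseteq R_d$ with $|W|=|V|$ ($|\cdot|$ = dimension). Fix $x_i$, let $Q=R/(x_i)$, with $\mathbf n_1W$ the span of $\{x_jm: j\neq i, m\in W\text{ monomial}\}$. A lex segment of $Q_e$ is a space spanned by an initial segment of the squarefree degree-$e$ monomials of $Q$ in lexicographic order (variables ordered $x_1>\dots>x_n$, omitting $x_i$). The $x_i$-decomposition of $V$ is $V=V_0\oplus x_iV_1$, with $V_0\subseteq Q_d$ spanned by the monomials of $V$ not divisible by $x_i$ and $V_1\subseteq Q_{d-1}$ spanned by the monomials $m$ with $x_im\in V$. The $x_i$-compression of $V$ is $L=L_0\oplus x_iL_1$, where $L_0\subseteq Q_d$, $L_1\subseteq Q_{d-1}$ are the lex segments with $|L_0|=|V_0|$, $|L_1|=|V_1|$. *)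

theory Defs
  imports Complex_Main "HOL-Library.Function_Algebras"
begin

(* Elements of R = k[x_1..x_n]/(x_1^2,...,x_n^2) are represented by their coefficient
   functions on squarefree monomials; a squarefree monomial is the finite set of
   indices of the variables dividing it. *)

definition scl :: "'k::field \<Rightarrow> (nat set \<Rightarrow> 'k) \<Rightarrow> (nat set \<Rightarrow> 'k)" where
  "scl c f = (\<lambda>S. c * f S)"

definition spn :: "(nat set \<Rightarrow> 'k::field) set \<Rightarrow> (nat set \<Rightarrow> 'k) set" where
  "spn W = module.span scl W"

definition subsp :: "(nat set \<Rightarrow> 'k::field) set \<Rightarrow> bool" where
  "subsp W = module.subspace scl W"

definition dimn :: "(nat set \<Rightarrow> 'k::field) set \<Rightarrow> nat" where
  "dimn W = vector_space.dim scl W"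

definition monom :: "nat set \<Rightarrow> (nat set \<Rightarrow> 'k::field)" where
  "monom S = (\<lambda>T. if T = S then 1 else 0)"

definition mulvar :: "nat \<Rightarrow> (nat set \<Rightarrow> 'k::field) \<Rightarrow> (nat set \<Rightarrow> 'k)" where
  "mulvar j f = (\<lambda>S. if j \<in> S then f (S - {j}) else 0)"

definition Rdeg :: "nat \<Rightarrow> nat \<Rightarrow> (nat set \<Rightarrow> 'k::field) set" where
  "Rdeg n d = {f. \<forall>S. f S \<noteq> 0 \<longrightarrow> S \<subseteq> {1..n} \<and> card S = d}"

definition m1 :: "nat \<Rightarrow> (nat set \<Rightarrow> 'k::field) set \<Rightarrow> (nat set \<Rightarrow> 'k) set" where
  "m1 n W = spn {mulvar j w | j w. j \<in> {1..n} \<and> w \<in> W}"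

definition gotzmann :: "nat \<Rightarrow> nat \<Rightarrow> (nat set \<Rightarrow> 'k::field) set \<Rightarrow> bool" where
  "gotzmann n d V \<longleftrightarrow> subsp V \<and> V \<subseteq> Rdeg n d \<and>
     (\<forall>W :: (nat set \<Rightarrow> 'k) set. subsp W \<and> W \<subseteq> Rdeg n d \<and> dimn W = dimn V \<longrightarrow> dimn (m1 n V) \<le> dimn (m1 n W))"

(* squarefree monomials of degree e in Q = R/(x_i) *)
definition Qmons :: "nat \<Rightarrow> nat \<Rightarrow> nat \<Rightarrow> nat set set" where
  "Qmons n i e = {S. S \<subseteq> {1..n} - {i} \<and> card S = e}"

(* lexicographic order with x_1 > ... > x_n: S >lex T *)
definition lex_gt :: "nat set \<Rightarrow> nat set \<Rightarrow> bool" where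
  "lex_gt S T \<longleftrightarrow> S \<noteq> T \<and> Min ((S - T) \<union> (T - S)) \<in> S"

definition lex_seg :: "nat \<Rightarrow> nat \<Rightarrow> nat \<Rightarrow> nat \<Rightarrow> nat set set" where
  "lex_seg n i e k = {S \<in> Qmons n i e. card {T \<in> Qmons n i e. lex_gt T S} < k}"

end

theory Submission
  imports Defs
begin

(* Lemma 4.7.  A squarefree monomial is identified with the set of indices of its
   variables, so a monomial space spn (monom ` M) is described by the family M of
   index sets, and m_1 of it is spanned by the upper shadow of M (all one-variable
   extensions).  The proof has four parts.
   (1) Monomials are linearly independent, so dimensions of monomial spaces are
       cardinalities of families and the Gotzmann property of spn (monom ` M) says
       that no family of degree-d sets of the same size has a smaller upper shadow.
   (2) Splitting along x_i: if M = V0 \<union> x_i V1 then the upper shadow of M has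
       |shadow V0| + |V0 \<union> shadow V1| elements (shadows taken in the variables other
       than x_i).
   (3) A Kruskal-Katona theorem for upper shadows: lex segments have the smallest
       upper shadow among families of the same size.  It is proved with Frankl's
       (U,V)-compressions, driven by a binary weight that increases strictly.
   (4) Comparing M with its x_i-compression L0 \<union> x_i L1, where shadow L1 \<subseteq> L0 by
       hypothesis, gives |V0 \<union> shadow V1| \<le> |V0|, i.e. shadow V1 \<subseteq> V0, which is
       exactly the statement. *)


section \<open>Monomial vector spaces\<close>

interpretation VS: vector_space "scl :: 'k::field \<Rightarrow> (nat set \<Rightarrow> 'k) \<Rightarrow> _"
  by unfold_locales (auto simp: scl_def fun_eq_iff algebra_simps)

lemma sum_fun_apply: "(sum f A) x = (\<Sum>a\<in>A. f a x)"
  by (induction A rule: infinite_finite_induct) auto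

lemma monom_inj: "inj monom"
  unfolding inj_def monom_def fun_eq_iff by (metis one_neq_zero)

text \<open>Distinct monomials are linearly independent: a linear combination evaluated
  at the index set S picks out the coefficient of monom S.\<close>

lemma independent_monom: "\<not> VS.dependent (monom ` A :: (nat set \<Rightarrow> 'k::field) set)"
proof -
  have "u v = 0"
    if t: "finite t" "t \<subseteq> monom ` A" and comb: "(\<Sum>w\<in>t. scl (u w) w) = (0 :: nat set \<Rightarrow> 'k)"
      and v: "v \<in> t" for t u v
  proof -
    obtain S where S: "v = monom S" using t v by blast
    have "(\<Sum>w\<in>t. scl (u w) w) S = (\<Sum>w\<in>t. u w * w S)"
      by (simp add: sum_fun_apply scl_def)
    also have "\<dots> = (\<Sum>w\<in>{v}. u w * w S)"
    proof (rule sum.mono_neutral_right)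
      show "\<forall>w\<in>t - {v}. u w * w S = 0"
      proof
        fix w assume "w \<in> t - {v}"
        then obtain T where "w = monom T" "T \<noteq> S" using t S by blast
        then show "u w * w S = 0" by (simp add: monom_def)
      qed
    qed (use t v in auto)
    also have "\<dots> = u v" using S by (simp add: monom_def)
    finally show ?thesis using comb by simp
  qed
  then show ?thesis unfolding VS.independent_explicit_module by blast
qed

lemma dimn_monom: "finite A \<Longrightarrow> dimn (spn (monom ` A) :: (nat set \<Rightarrow> 'k::field) set) = card A"
  unfolding dimn_def spn_def
  using VS.dim_span_eq_card_independent[OF independent_monom] card_image[OF inj_on_subset[OF monom_inj]]
  by (metis subset_UNIV)

text \<open>A monomial lies in a monomial space exactly when it is one of its spanning
  monomials: the span consists of functions supported on A.\<close>

lemma monom_in_spn: "(monom S :: nat set \<Rightarrow> 'k::field) \<in> spn (monom ` A) \<longleftrightarrow> S \<in> A"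
proof
  assume S: "(monom S :: nat set \<Rightarrow> 'k::field) \<in> spn (monom ` A)"
  have "spn (monom ` A) \<subseteq> {f :: nat set \<Rightarrow> 'k. \<forall>T. T \<notin> A \<longrightarrow> f T = 0}"
    unfolding spn_def
    by (rule VS.span_minimal) (auto simp: monom_def VS.subspace_def scl_def)
  with S show "S \<in> A" by (force simp: monom_def)
qed (auto simp: spn_def intro: VS.span_base)

text \<open>The upper shadow of a family F in the variables X: all sets obtained by adding
  one new element of X.  It is the combinatorial counterpart of multiplication by
  the variables in X.\<close>

definition ushadow :: "nat set \<Rightarrow> nat set set \<Rightarrow> nat set set" where
  "ushadow X F = {insert j A | j A. A \<in> F \<and> j \<in> X \<and> j \<notin> A}"

lemma ushadow_memI: "A \<in> F \<Longrightarrow> j \<in> X \<Longrightarrow> j \<notin> A \<Longrightarrow> insert j A \<in> ushadow X F"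
  unfolding ushadow_def by blast

lemma finite_ushadow: "finite X \<Longrightarrow> F \<subseteq> Pow X \<Longrightarrow> finite (ushadow X F)"
  by (rule finite_subset[of _ "Pow X"]) (auto simp: ushadow_def)

lemma mulvar_monom: "mulvar j (monom S) = (if j \<in> S then 0 else monom (insert j S))"
  by (auto simp: mulvar_def monom_def fun_eq_iff)

lemma mulvar_span:
  assumes "w \<in> spn B"
  shows "mulvar j w \<in> spn (mulvar j ` (B :: (nat set \<Rightarrow> 'k::field) set))"
proof -
  have lin: "mulvar j (x + y) = mulvar j x + mulvar j y" "mulvar j (scl c x) = scl c (mulvar j x)"
    "mulvar j 0 = (0 :: nat set \<Rightarrow> 'k)" for x y :: "nat set \<Rightarrow> 'k" and c
    by (auto simp: mulvar_def scl_def)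
  have "VS.subspace {w :: nat set \<Rightarrow> 'k. mulvar j w \<in> spn (mulvar j ` B)}"
    unfolding VS.subspace_def spn_def by (simp add: lin VS.span_zero VS.span_add VS.span_scale)
  then show ?thesis
    using VS.span_induct[of w B "\<lambda>w. mulvar j w \<in> spn (mulvar j ` B)"] assms
    by (auto simp: spn_def intro: VS.span_base)
qed

lemma mulvar_monom_in_span:
  assumes "j \<in> X" "S \<in> A"
  shows "(mulvar j (monom S) :: nat set \<Rightarrow> 'k::field) \<in> spn (monom ` ushadow X A)"
  using assms ushadow_memI[OF assms(2,1)]
  by (cases "j \<in> S") (auto simp: mulvar_monom spn_def VS.span_zero VS.span_base)

lemma m1_monom: "m1 n (spn (monom ` A) :: (nat set \<Rightarrow> 'k::field) set) = spn (monom ` ushadow {1..n} A)"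
proof
  show "m1 n (spn (monom ` A) :: (nat set \<Rightarrow> 'k::field) set) \<subseteq> spn (monom ` ushadow {1..n} A)"
    unfolding m1_def spn_def
  proof (rule VS.span_minimal[OF _ VS.subspace_span], safe)
    fix j and w :: "nat set \<Rightarrow> 'k"
    assume j: "j \<in> {1..n}" and w: "w \<in> module.span scl (monom ` A)"
    have "mulvar j ` (monom ` A :: (nat set \<Rightarrow> 'k) set) \<subseteq> spn (monom ` ushadow {1..n} A)"
      using mulvar_monom_in_span[OF j] by blast
    moreover have "mulvar j w \<in> spn (mulvar j ` monom ` A)"
      using w mulvar_span[of w "monom ` A" j] by (simp add: spn_def)
    ultimately show "mulvar j w \<in> module.span scl (monom ` ushadow {1..n} A)"
      unfolding spn_def by (metis VS.span_mono VS.span_span subsetD)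
  qed
next
  show "spn (monom ` ushadow {1..n} A) \<subseteq> m1 n (spn (monom ` A) :: (nat set \<Rightarrow> 'k::field) set)"
    unfolding m1_def spn_def
  proof (rule VS.span_mono)
    show "(monom ` ushadow {1..n} A :: (nat set \<Rightarrow> 'k) set) \<subseteq> {mulvar j w |j w. j \<in> {1..n} \<and> w \<in> module.span scl (monom ` A)}"
    proof
      fix x :: "nat set \<Rightarrow> 'k" assume "x \<in> monom ` ushadow {1..n} A"
      then obtain j S where "S \<in> A" "j \<in> {1..n}" "j \<notin> S" "x = monom (insert j S)"
        unfolding ushadow_def by blast
      then show "x \<in> {mulvar j w |j w. j \<in> {1..n} \<and> w \<in> module.span scl (monom ` A)}"
        by (auto simp: mulvar_monom intro!: exI[of _ j] exI[of _ "monom S"] VS.span_base)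
    qed
  qed
qed

lemma Rdeg_subspace: "VS.subspace (Rdeg n d :: (nat set \<Rightarrow> 'k::field) set)"
proof -
  have "Rdeg n d = {f :: nat set \<Rightarrow> 'k. \<forall>S. \<not> (S \<subseteq> {1..n} \<and> card S = d) \<longrightarrow> f S = 0}"
    unfolding Rdeg_def by blast
  then show ?thesis by (simp add: VS.subspace_def scl_def)
qed

lemma spn_Rdeg:
  assumes "A \<subseteq> {S. S \<subseteq> {1..n} \<and> card S = d}"
  shows "spn (monom ` A) \<subseteq> (Rdeg n d :: (nat set \<Rightarrow> 'k::field) set)"
  unfolding spn_def
proof (rule VS.span_minimal[OF _ Rdeg_subspace], rule subsetI)
  fix x :: "nat set \<Rightarrow> 'k" assume "x \<in> monom ` A"
  then obtain S where "S \<in> A" "x = monom S" by blast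
  then show "x \<in> Rdeg n d" using assms unfolding Rdeg_def monom_def by auto
qed

lemma gotzmann_ushadow:
  assumes gotz: "gotzmann n d (spn (monom ` M) :: (nat set \<Rightarrow> 'k::field) set)"
    and M: "M \<subseteq> {S. S \<subseteq> {1..n} \<and> card S = d}"
    and N: "N \<subseteq> {S. S \<subseteq> {1..n} \<and> card S = d}"
    and card_N: "card N = card M"
  shows "card (ushadow {1..n} M) \<le> card (ushadow {1..n} N)"
proof -
  have fin: "finite X" if "X \<subseteq> {S. S \<subseteq> {1..n} \<and> card S = d}" for X
    by (rule finite_subset[of _ "Pow {1..n}"]) (use that in auto)
  have fin_shadow: "finite (ushadow {1..n} X)" if "X \<subseteq> {S. S \<subseteq> {1..n} \<and> card S = d}" for X
    by (rule finite_ushadow) (use that in auto)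
  have "dimn (m1 n (spn (monom ` M) :: (nat set \<Rightarrow> 'k) set))
      \<le> dimn (m1 n (spn (monom ` N) :: (nat set \<Rightarrow> 'k) set))"
    using gotz spn_Rdeg[OF N] dimn_monom fin[OF M] fin[OF N] card_N
    unfolding gotzmann_def by (metis spn_def subsp_def VS.subspace_span)
  then show ?thesis
    unfolding m1_monom using dimn_monom[OF fin_shadow[OF M]] dimn_monom[OF fin_shadow[OF N]]
    by metis
qed

text \<open>The hypothesis n_1 L_1 \<subseteq> L_0, read off for monomial spaces.\<close>

lemma n1_ushadow:
  assumes "spn {mulvar j (monom T) | j T. j \<in> {1..n} \<and> j \<noteq> i \<and> T \<in> A}
             \<subseteq> (spn (monom ` B) :: (nat set \<Rightarrow> 'k::field) set)"
  shows "ushadow ({1..n} - {i}) A \<subseteq> B"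
proof
  fix D assume "D \<in> ushadow ({1..n} - {i}) A"
  then obtain j T where jT: "T \<in> A" "j \<in> {1..n}" "j \<noteq> i" "j \<notin> T" "D = insert j T"
    unfolding ushadow_def by blast
  then have "(mulvar j (monom T) :: nat set \<Rightarrow> 'k)
      \<in> spn {mulvar j (monom T) | j T. j \<in> {1..n} \<and> j \<noteq> i \<and> T \<in> A}"
    unfolding spn_def by (blast intro: VS.span_base)
  then have "(monom D :: nat set \<Rightarrow> 'k) \<in> spn (monom ` B)"
    using assms jT by (auto simp: mulvar_monom)
  then show "D \<in> B" by (simp add: monom_in_spn)
qed


section \<open>Splitting the upper shadow along a variable\<close>

text \<open>For a family A0 \<union> x_i A1 (A0, A1 not involving i), a set in the upper shadow
  either avoids i (and comes from A0) or contains i (and comes from A0 by adding i,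
  or from the shadow of A1).\<close>

lemma ushadow_split:
  assumes i: "i \<notin> X" and A0: "A0 \<subseteq> Pow X" and A1: "A1 \<subseteq> Pow X"
  shows "ushadow (insert i X) (A0 \<union> insert i ` A1) = ushadow X A0 \<union> insert i ` (A0 \<union> ushadow X A1)"
proof
  show "ushadow (insert i X) (A0 \<union> insert i ` A1) \<subseteq> ushadow X A0 \<union> insert i ` (A0 \<union> ushadow X A1)"
  proof
    fix D assume "D \<in> ushadow (insert i X) (A0 \<union> insert i ` A1)"
    then obtain j S where jS: "S \<in> A0 \<union> insert i ` A1" "j \<in> insert i X" "j \<notin> S" "D = insert j S"
      by (auto simp: ushadow_def)
    show "D \<in> ushadow X A0 \<union> insert i ` (A0 \<union> ushadow X A1)"
    proof (cases "S \<in> A0")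
      case True
      then show ?thesis using jS unfolding ushadow_def by blast
    next
      case False
      then obtain T where T: "T \<in> A1" "S = insert i T" using jS by auto
      then have "insert j T \<in> ushadow X A1" using jS unfolding ushadow_def by blast
      moreover have "D = insert i (insert j T)" using jS T by auto
      ultimately show ?thesis by blast
    qed
  qed
next
  show "ushadow X A0 \<union> insert i ` (A0 \<union> ushadow X A1) \<subseteq> ushadow (insert i X) (A0 \<union> insert i ` A1)"
  proof
    fix D assume "D \<in> ushadow X A0 \<union> insert i ` (A0 \<union> ushadow X A1)"
    then consider "D \<in> ushadow X A0" | S where "S \<in> A0" "D = insert i S"
      | j T where "T \<in> A1" "j \<in> X" "j \<notin> T" "D = insert i (insert j T)"
      unfolding ushadow_def by blast
    then show "D \<in> ushadow (insert i X) (A0 \<union> insert i ` A1)"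
    proof cases
      case 1 then show ?thesis unfolding ushadow_def by blast
    next
      case (2 S)
      moreover have "i \<notin> S" using 2 A0 i by auto
      ultimately show ?thesis unfolding ushadow_def by blast
    next
      case (3 j T)
      then have "i \<notin> T" "j \<noteq> i" using A1 i by auto
      with 3 have "j \<notin> insert i T" "D = insert j (insert i T)" by auto
      then show ?thesis using 3 unfolding ushadow_def by blast
    qed
  qed
qed

lemma card_union_insert_image:
  assumes "finite A0" "finite A1" "\<forall>S\<in>A0. i \<notin> S" "\<forall>S\<in>A1. i \<notin> S"
  shows "card (A0 \<union> insert i ` A1) = card A0 + card A1"
proof -
  have inj: "inj_on (insert i) A1"
    by (rule inj_onI) (use assms(4) in \<open>metis Diff_insert_absorb\<close>)
  have "card (A0 \<union> insert i ` A1) = card A0 + card (insert i ` A1)"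
    by (rule card_Un_disjoint) (use assms in auto)
  also have "\<dots> = card A0 + card A1" using card_image[OF inj] by simp
  finally show ?thesis .
qed

lemma card_ushadow_split:
  assumes "finite X" "i \<notin> X" "A0 \<subseteq> Pow X" "A1 \<subseteq> Pow X"
  shows "card (ushadow (insert i X) (A0 \<union> insert i ` A1))
       = card (ushadow X A0) + card (A0 \<union> ushadow X A1)"
proof -
  have "finite A0" using assms(1,3) by (meson finite_Pow_iff finite_subset)
  then have "finite (ushadow X A0)" "finite (A0 \<union> ushadow X A1)"
    using assms finite_ushadow by auto
  moreover have "\<forall>S\<in>ushadow X A0. i \<notin> S" "\<forall>S\<in>A0 \<union> ushadow X A1. i \<notin> S"
    using assms by (auto simp: ushadow_def)
  ultimately show ?thesis
    unfolding ushadow_split[OF assms(2-4)] by (rule card_union_insert_image)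
qed


section \<open>Lex segments minimize the upper shadow\<close>

definition Qm :: "nat set \<Rightarrow> nat \<Rightarrow> nat set set" where
  "Qm X e = {S. S \<subseteq> X \<and> card S = e}"

lemma finite_Qm: "finite X \<Longrightarrow> finite (Qm X e)"
  by (rule finite_subset[of _ "Pow X"]) (auto simp: Qm_def)

lemma finite_Qmons: "finite (Qmons n i e)"
  by (rule finite_subset[of _ "Pow {1..n}"]) (auto simp: Qmons_def)

definition sh :: "nat set \<Rightarrow> nat set \<Rightarrow> nat set \<Rightarrow> nat set" where
  "sh U V A = (if V \<subseteq> A \<and> U \<inter> A = {} then (A - V) \<union> U else A)"

definition cmp :: "nat set \<Rightarrow> nat set \<Rightarrow> nat set set \<Rightarrow> nat set set" where
  "cmp U V F = {A \<in> F. sh U V A \<in> F} \<union> (sh U V ` {A \<in> F. sh U V A \<notin> F})"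

definition compressed :: "nat set \<Rightarrow> nat set \<Rightarrow> nat set set \<Rightarrow> bool" where
  "compressed U V F \<longleftrightarrow> (\<forall>A\<in>F. sh U V A \<in> F)"

text \<open>The pairs used: disjoint nonempty U, V \<subseteq> X of equal size whose smallest
  element lies in U, so that shifting makes a set lexicographically larger.\<close>

definition valid :: "nat set \<Rightarrow> nat set \<Rightarrow> nat set \<Rightarrow> bool" where
  "valid X U V \<longleftrightarrow> U \<subseteq> X \<and> V \<subseteq> X \<and> U \<inter> V = {} \<and> card U = card V \<and> U \<noteq> {} \<and> Min (U \<union> V) \<in> U"

lemma sh_moved: "sh U V A \<noteq> A \<Longrightarrow> V \<subseteq> A \<and> U \<inter> A = {} \<and> sh U V A = (A - V) \<union> U"
  by (auto simp: sh_def split: if_splits)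

lemma sh_idem: "U \<noteq> {} \<Longrightarrow> sh U V (sh U V A) = sh U V A"
  by (auto simp: sh_def)

lemma sh_inj:
  assumes "sh U V A = sh U V B" "sh U V A \<noteq> A" "sh U V B \<noteq> B"
  shows "A = B"
proof -
  from sh_moved[OF assms(2)] have a: "V \<subseteq> A" "U \<inter> A = {}" "sh U V A = (A - V) \<union> U" by auto
  from sh_moved[OF assms(3)] have b: "V \<subseteq> B" "U \<inter> B = {}" "sh U V B = (B - V) \<union> U" by auto
  have "A = (sh U V A - U) \<union> V" using a by auto
  also have "\<dots> = (sh U V B - U) \<union> V" using assms(1) by simp
  also have "\<dots> = B" using b by auto
  finally show ?thesis .
qed

lemma cmp_memI: "D \<in> G \<Longrightarrow> sh U V D \<in> G \<Longrightarrow> D \<in> cmp U V G"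
  by (simp add: cmp_def)

lemma cmp_image:
  assumes "U \<noteq> {}" "B \<in> G"
  shows "sh U V B \<in> cmp U V G"
proof (cases "sh U V B \<in> G")
  case True
  then show ?thesis using cmp_memI sh_idem[OF assms(1)] by metis
next
  case False
  then show ?thesis using assms(2) by (auto simp: cmp_def)
qed

text \<open>Compression preserves the size of a family (the shift is injective on the
  sets it moves) and the degree of its members.\<close>

lemma card_cmp:
  assumes "finite F"
  shows "card (cmp U V F) = card F"
proof -
  let ?P1 = "{A \<in> F. sh U V A \<in> F}" and ?P2 = "{A \<in> F. sh U V A \<notin> F}"
  have inj: "inj_on (sh U V) ?P2"
    by (rule inj_onI, rule sh_inj) auto
  have "card (cmp U V F) = card ?P1 + card (sh U V ` ?P2)"
    unfolding cmp_def by (rule card_Un_disjoint) (use assms in auto)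
  also have "\<dots> = card ?P1 + card ?P2" using card_image[OF inj] by simp
  also have "\<dots> = card (?P1 \<union> ?P2)" by (rule card_Un_disjoint[symmetric]) (use assms in auto)
  also have "?P1 \<union> ?P2 = F" by auto
  finally show ?thesis .
qed

lemma cmp_Qm:
  assumes "F \<subseteq> Qm X e" "finite X" "U \<subseteq> X" "card U = card V" "finite V"
  shows "cmp U V F \<subseteq> Qm X e"
proof
  fix B assume "B \<in> cmp U V F"
  then consider "B \<in> F" | A where "A \<in> F" "sh U V A \<noteq> A" "B = sh U V A"
    unfolding cmp_def by force
  then show "B \<in> Qm X e"
  proof cases
    case 1 then show ?thesis using assms by auto
  next
    case (2 A)
    from sh_moved[OF 2(2)] have moved: "V \<subseteq> A" "U \<inter> A = {}" "B = (A - V) \<union> U" using 2 by auto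
    have A: "A \<subseteq> X" "card A = e" using 2 assms by (auto simp: Qm_def)
    have fin: "finite A" "finite U" using A assms finite_subset by auto
    have "card B = card (A - V) + card U"
      unfolding moved(3) by (rule card_Un_disjoint) (use moved fin in auto)
    also have "card (A - V) = card A - card V" using moved fin by (simp add: card_Diff_subset assms)
    finally have "card B = e" using A assms card_mono[OF fin(1) moved(1)] by simp
    moreover have "B \<subseteq> X" using moved A assms by auto
    ultimately show ?thesis by (simp add: Qm_def)
  qed
qed

text \<open>If F is (U - {u}, V - {v})-compressed for suitable u, then
  for a set B \<in> F containing V - {v} and avoiding U, the set B - (V - {v}) \<union> U is in the
  upper shadow of F: it is the shift of B with u added.\<close>

lemma ushadow_shift:
  assumes "compressed (U - {u}) (V - {v}) F" "B \<in> F" "V - {v} \<subseteq> B" "U \<inter> B = {}"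
    and "u \<in> U" "U \<subseteq> X"
  shows "(B - (V - {v})) \<union> U \<in> ushadow X F"
proof -
  have "sh (U - {u}) (V - {v}) B = (B - (V - {v})) \<union> (U - {u})"
    using assms(3,4) by (auto simp: sh_def)
  then have "(B - (V - {v})) \<union> (U - {u}) \<in> F" using assms(1,2) by (metis compressed_def)
  moreover have "u \<in> X" "u \<notin> (B - (V - {v})) \<union> (U - {u})" using assms(4-6) by auto
  ultimately have "insert u ((B - (V - {v})) \<union> (U - {u})) \<in> ushadow X F" by (rule ushadow_memI)
  moreover have "insert u ((B - (V - {v})) \<union> (U - {u})) = (B - (V - {v})) \<union> U" using assms(5) by auto
  ultimately show ?thesis by simp
qed

lemma ushadow_cmp_kept:
  assumes cond: "\<forall>v\<in>V. \<exists>u\<in>U. compressed (U - {u}) (V - {v}) F" and "U \<subseteq> X"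
    and A: "A \<in> F" "sh U V A \<in> F" and j: "j \<in> X" "j \<notin> A"
  shows "insert j A \<in> cmp U V (ushadow X F)"
proof (rule cmp_memI)
  show D: "insert j A \<in> ushadow X F" by (rule ushadow_memI[OF A(1) j])
  show "sh U V (insert j A) \<in> ushadow X F"
  proof (cases "V \<subseteq> insert j A \<and> U \<inter> insert j A = {}")
    case False
    then have "sh U V (insert j A) = insert j A" unfolding sh_def by (rule if_not_P)
    then show ?thesis using D by simp
  next
    case True
    show ?thesis
    proof (cases "j \<in> V")
      case False
      with True have "sh U V (insert j A) = insert j (sh U V A)" "j \<notin> sh U V A"
        using j by (auto simp: sh_def)
      then show ?thesis using ushadow_memI[OF A(2) j(1)] by simp
    next
      case jV: True
      from cond jV obtain u where u: "u \<in> U" "compressed (U - {u}) (V - {j}) F" by blast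
      have "sh U V (insert j A) = (A - (V - {j})) \<union> U" using True jV j by (auto simp: sh_def)
      moreover have "(A - (V - {j})) \<union> U \<in> ushadow X F"
        by (rule ushadow_shift[OF u(2) A(1) _ _ u(1) assms(2)]) (use True in auto)
      ultimately show ?thesis by simp
    qed
  qed
qed

lemma ushadow_cmp_moved:
  assumes cond: "\<forall>v\<in>V. \<exists>u\<in>U. compressed (U - {u}) (V - {v}) F" and U: "U \<noteq> {}" "U \<subseteq> X"
    and A: "A \<in> F" "sh U V A \<noteq> A" and j: "j \<in> X" "j \<notin> sh U V A"
  shows "insert j (sh U V A) \<in> cmp U V (ushadow X F)"
proof -
  from sh_moved[OF A(2)] have moved: "V \<subseteq> A" "U \<inter> A = {}" "sh U V A = (A - V) \<union> U" by auto
  show ?thesis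
  proof (cases "j \<in> V")
    case False
    then have "j \<notin> A" using j moved by auto
    then have "insert j A \<in> ushadow X F" by (rule ushadow_memI[OF A(1) j(1)])
    moreover have "sh U V (insert j A) = insert j (sh U V A)" using moved False j by (auto simp: sh_def)
    ultimately show ?thesis using cmp_image[OF U(1)] by metis
  next
    case True
    from cond True obtain u where u: "u \<in> U" "compressed (U - {u}) (V - {j}) F" by blast
    have D: "insert j (sh U V A) = (A - (V - {j})) \<union> U" using moved True by auto
    have "(A - (V - {j})) \<union> U \<in> ushadow X F"
      by (rule ushadow_shift[OF u(2) A(1) _ _ u(1) U(2)]) (use moved in auto)
    moreover have "sh U V ((A - (V - {j})) \<union> U) = (A - (V - {j})) \<union> U" using U(1) by (auto simp: sh_def)
    ultimately show ?thesis unfolding D by (metis cmp_memI)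
  qed
qed

lemma ushadow_cmp:
  assumes cond: "\<forall>v\<in>V. \<exists>u\<in>U. compressed (U - {u}) (V - {v}) F" and U: "U \<noteq> {}" "U \<subseteq> X"
  shows "ushadow X (cmp U V F) \<subseteq> cmp U V (ushadow X F)"
proof
  fix D assume "D \<in> ushadow X (cmp U V F)"
  then obtain j A' where A': "A' \<in> cmp U V F" "j \<in> X" "j \<notin> A'" "D = insert j A'"
    by (auto simp: ushadow_def)
  from A'(1) consider "A' \<in> F" "sh U V A' \<in> F" | A where "A \<in> F" "sh U V A \<noteq> A" "A' = sh U V A"
    unfolding cmp_def by force
  then show "D \<in> cmp U V (ushadow X F)"
  proof cases
    case 1 then show ?thesis using ushadow_cmp_kept[OF cond U(2)] A' by blast
  next
    case (2 A) then show ?thesis using ushadow_cmp_moved[OF cond U] A' by blast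
  qed
qed

lemma card_ushadow_cmp:
  assumes "finite X" "F \<subseteq> Pow X" "U \<noteq> {}" "U \<subseteq> X"
    and cond: "\<forall>v\<in>V. \<exists>u\<in>U. compressed (U - {u}) (V - {v}) F"
  shows "card (ushadow X (cmp U V F)) \<le> card (ushadow X F)"
proof -
  have fin: "finite (ushadow X F)" using finite_ushadow assms by blast
  have "card (ushadow X (cmp U V F)) \<le> card (cmp U V (ushadow X F))"
    by (rule card_mono) (use ushadow_cmp[OF cond assms(3,4)] fin in \<open>auto simp: cmp_def\<close>)
  also have "\<dots> = card (ushadow X F)" using card_cmp fin by blast
  finally show ?thesis .
qed

text \<open>The binary weight of S \<subseteq> {..n}: sets that are lexicographically larger
  have larger weight, so every proper shift strictly increases the total weight
  of a family, which guarantees that repeated compression terminates.\<close>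

definition val :: "nat \<Rightarrow> nat set \<Rightarrow> nat" where
  "val n S = (\<Sum>x\<in>S. (2::nat) ^ (n - x))"

lemma geometric_tail: "m \<le> n \<Longrightarrow> (\<Sum>x\<in>{m<..n}. (2::nat) ^ (n - x)) < 2 ^ (n - m)"
proof (induction "n - m" arbitrary: m)
  case 0 then show ?case by simp
next
  case (Suc k)
  then have mn: "m < n" by simp
  have "{m<..n} = insert (Suc m) {Suc m<..n}" using mn by auto
  then have "(\<Sum>x\<in>{m<..n}. (2::nat) ^ (n - x)) = 2 ^ (n - Suc m) + (\<Sum>x\<in>{Suc m<..n}. 2 ^ (n - x))"
    by simp
  also have "\<dots> < 2 ^ (n - Suc m) + 2 ^ (n - Suc m)"
    using Suc.hyps(1)[of "Suc m"] Suc.hyps(2) mn by simp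
  also have "\<dots> = 2 ^ (n - m)" using mn by (metis Suc_diff_Suc mult_2 power_Suc)
  finally show ?case .
qed

lemma lex_val:
  assumes S: "S \<subseteq> {..n}" and T: "T \<subseteq> {..n}" and gt: "lex_gt S T"
  shows "val n T < val n S"
proof -
  have fin: "finite S" "finite T" using S T finite_subset by auto
  define m where "m = Min ((S - T) \<union> (T - S))"
  have mS: "m \<in> S" and mT: "m \<notin> T"
    using gt Min_in[of "(S - T) \<union> (T - S)"] fin unfolding lex_gt_def m_def by auto
  have below: "x \<in> S \<longleftrightarrow> x \<in> T" if "x < m" for x
  proof (rule ccontr)
    assume "\<not> (x \<in> S \<longleftrightarrow> x \<in> T)"
    then have "m \<le> x" using fin unfolding m_def by (intro Min_le) auto
    then show False using that by simp
  qed
  define P where "P = {x \<in> T. x < m}"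
  have mn: "m \<le> n" using mS S by auto
  have "T \<subseteq> P \<union> {m<..n}"
  proof
    fix x assume x: "x \<in> T"
    then have "x \<noteq> m" "x \<le> n" using mT T by auto
    then show "x \<in> P \<union> {m<..n}" using x by (auto simp: P_def)
  qed
  then have "val n T \<le> (\<Sum>x\<in>P \<union> {m<..n}. (2::nat) ^ (n - x))"
    unfolding val_def by (rule sum_mono2[rotated]) (use fin P_def in auto)
  also have "\<dots> = val n P + (\<Sum>x\<in>{m<..n}. (2::nat) ^ (n - x))"
    unfolding val_def by (rule sum.union_disjoint) (use fin P_def in auto)
  also have "\<dots> < val n P + 2 ^ (n - m)" using geometric_tail[OF mn] by simp
  also have "\<dots> = val n (insert m P)" unfolding val_def using fin P_def by simp
  also have "\<dots> \<le> val n S"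
    unfolding val_def by (rule sum_mono2) (use fin mS below P_def in auto)
  finally show ?thesis .
qed

lemma sh_val:
  assumes "valid X U V" "X \<subseteq> {..n}" "A \<subseteq> X" "sh U V A \<noteq> A"
  shows "val n A < val n (sh U V A)"
proof -
  from sh_moved[OF assms(4)] have moved: "V \<subseteq> A" "U \<inter> A = {}" "sh U V A = (A - V) \<union> U" by auto
  have UV: "U \<subseteq> X" "V \<subseteq> X" "U \<inter> V = {}" "Min (U \<union> V) \<in> U" using assms(1) by (auto simp: valid_def)
  have "(sh U V A - A) \<union> (A - sh U V A) = U \<union> V" using moved UV by auto
  then have "lex_gt (sh U V A) A" unfolding lex_gt_def using assms(4) UV moved by auto
  moreover have "sh U V A \<subseteq> {..n}" "A \<subseteq> {..n}" using moved UV assms by auto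
  ultimately show ?thesis using lex_val by blast
qed

lemma cmp_val:
  assumes "finite F" "F \<subseteq> Pow X" "valid X U V" "X \<subseteq> {..n}" "\<not> compressed U V F"
  shows "sum (val n) F < sum (val n) (cmp U V F)"
proof -
  let ?P1 = "{A \<in> F. sh U V A \<in> F}" and ?P2 = "{A \<in> F. sh U V A \<notin> F}"
  have inj: "inj_on (sh U V) ?P2"
    by (rule inj_onI, rule sh_inj) auto
  have "sum (val n) F = sum (val n) (?P1 \<union> ?P2)" by (rule arg_cong[where f = "sum (val n)"]) auto
  also have "\<dots> = sum (val n) ?P1 + sum (val n) ?P2"
    by (rule sum.union_disjoint) (use assms(1) in auto)
  also have "sum (val n) ?P2 < sum (\<lambda>A. val n (sh U V A)) ?P2"
  proof (rule sum_strict_mono)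
    show "finite ?P2" using assms(1) by auto
    show "?P2 \<noteq> {}" using assms(5) by (auto simp: compressed_def)
  next
    fix A assume "A \<in> ?P2"
    then show "val n A < val n (sh U V A)" using sh_val[OF assms(3,4)] assms(2) by force
  qed
  also have "sum (\<lambda>A. val n (sh U V A)) ?P2 = sum (val n) (sh U V ` ?P2)"
    using sum.reindex[OF inj, of "val n"] by simp
  also have "sum (val n) ?P1 + sum (val n) (sh U V ` ?P2) = sum (val n) (cmp U V F)"
    unfolding cmp_def by (rule sum.union_disjoint[symmetric]) (use assms(1) in auto)
  finally show ?thesis by simp
qed

text \<open>If (U,V) is a valid pair for which F is not
  compressed and |U| is minimal, then removing any v from V and a suitable u from U
  gives a pair for which F is compressed; this is the hypothesis of
  card_ushadow_cmp.\<close>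

lemma valid_shrink:
  assumes X: "finite X" and UV: "valid X U V" and two: "2 \<le> card U" and v: "v \<in> V"
  shows "valid X (U - {Max U}) (V - {v})"
proof -
  have UX: "U \<subseteq> X" "V \<subseteq> X" "U \<inter> V = {}" "card U = card V" "Min (U \<union> V) \<in> U"
    using UV by (auto simp: valid_def)
  have fin: "finite U" "finite V" using UX(1,2) by (auto intro: rev_finite_subset[OF X])
  define m where "m = Min (U \<union> V)"
  have mU: "m \<in> U" and m_le: "\<And>y. y \<in> U \<union> V \<Longrightarrow> m \<le> y" using UX fin by (auto simp: m_def)
  have MU: "Max U \<in> U" using fin two by (intro Max_in) auto
  have "m \<noteq> Max U"
  proof
    assume "m = Max U"
    then have "U \<subseteq> {m}" using m_le fin by (auto intro: antisym)
    then show False using two card_mono[of "{m}" U] by simp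
  qed
  then have m': "m \<in> (U - {Max U}) \<union> (V - {v})" using mU by auto
  then have "Min ((U - {Max U}) \<union> (V - {v})) = m"
    by (intro Min_eqI) (use fin m_le in auto)
  moreover have "card (U - {Max U}) = card (V - {v})" using fin MU v UX by simp
  ultimately show ?thesis using UX m' \<open>m \<noteq> Max U\<close> mU unfolding valid_def by auto
qed

lemma minimal_pair_condition:
  assumes X: "finite X" and UV: "valid X U V"
    and minimal: "\<And>U' V'. valid X U' V' \<Longrightarrow> \<not> compressed U' V' F \<Longrightarrow> card U \<le> card U'"
  shows "\<forall>v\<in>V. \<exists>u\<in>U. compressed (U - {u}) (V - {v}) F"
proof
  fix v assume v: "v \<in> V"
  have UX: "U \<subseteq> X" "V \<subseteq> X" "card U = card V" "U \<noteq> {}" using UV by (auto simp: valid_def)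
  have fin: "finite U" "finite V" using UX(1,2) by (auto intro: rev_finite_subset[OF X])
  show "\<exists>u\<in>U. compressed (U - {u}) (V - {v}) F"
  proof (cases "card U = 1")
    case True
    then obtain u where "U = {u}" by (auto simp: card_Suc_eq)
    moreover obtain w where "V = {w}" using True UX(3) by (auto simp: card_Suc_eq)
    ultimately show ?thesis using v by (auto simp: compressed_def sh_def)
  next
    case False
    have "card U \<noteq> 0" using UX(4) fin(1) by simp
    with False have "2 \<le> card U" by linarith
    then have smaller: "valid X (U - {Max U}) (V - {v})" by (rule valid_shrink[OF X UV _ v])
    have MU: "Max U \<in> U" using fin UX by simp
    then have "card (U - {Max U}) < card U" using fin(1) by (intro card_Diff1_less)
    then have "compressed (U - {Max U}) (V - {v}) F" using minimal[OF smaller] by linarith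
    then show ?thesis using MU by blast
  qed
qed

lemma compression_step:
  assumes X: "finite X" "X \<subseteq> {..n}" and F: "F \<subseteq> Qm X e"
    and not_compressed: "\<exists>U V. valid X U V \<and> \<not> compressed U V F"
  shows "\<exists>F1. F1 \<subseteq> Qm X e \<and> card F1 = card F \<and> card (ushadow X F1) \<le> card (ushadow X F)
           \<and> sum (val n) F < sum (val n) F1"
proof -
  have finF: "finite F" using F finite_Qm X finite_subset by blast
  have FP: "F \<subseteq> Pow X" using F by (auto simp: Qm_def)
  define P where "P = (\<lambda>k. \<exists>U V. valid X U V \<and> \<not> compressed U V F \<and> card U = k)"
  have "\<exists>k. P k" using not_compressed unfolding P_def by blast
  then have "P (LEAST k. P k)" by (rule LeastI_ex)
  then obtain U V where UV: "valid X U V" "\<not> compressed U V F" "card U = (LEAST k. P k)"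
    unfolding P_def by blast
  have "card U \<le> card U'" if "valid X U' V'" "\<not> compressed U' V' F" for U' V'
    using UV(3) that P_def by (metis Least_le)
  then have cond: "\<forall>v\<in>V. \<exists>u\<in>U. compressed (U - {u}) (V - {v}) F"
    by (rule minimal_pair_condition[OF X(1) UV(1)])
  have U: "U \<subseteq> X" "V \<subseteq> X" "card U = card V" "U \<noteq> {}" using UV by (auto simp: valid_def)
  show ?thesis
  proof (intro exI conjI)
    show "cmp U V F \<subseteq> Qm X e" by (rule cmp_Qm) (use F X U rev_finite_subset[OF X(1) U(2)] in auto)
    show "card (cmp U V F) = card F" using card_cmp finF by blast
    show "card (ushadow X (cmp U V F)) \<le> card (ushadow X F)"
      by (rule card_ushadow_cmp) (use X FP U cond in auto)
    show "sum (val n) F < sum (val n) (cmp U V F)" by (rule cmp_val) (use finF FP UV X in auto)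
  qed
qed

text \<open>Iterating compression steps (the weight is bounded by that of Qm X e) yields a
  family that is compressed for every valid pair.\<close>

lemma compressed_family_exists:
  assumes X: "finite X" "X \<subseteq> {..n}"
  shows "F \<subseteq> Qm X e \<Longrightarrow> \<exists>F'. F' \<subseteq> Qm X e \<and> card F' = card F \<and>
           card (ushadow X F') \<le> card (ushadow X F) \<and> (\<forall>U V. valid X U V \<longrightarrow> compressed U V F')"
proof (induction "sum (val n) (Qm X e) - sum (val n) F" arbitrary: F rule: less_induct)
  case less
  show ?case
  proof (cases "\<forall>U V. valid X U V \<longrightarrow> compressed U V F")
    case True then show ?thesis using less.prems by blast
  next
    case False
    then obtain F1 where F1: "F1 \<subseteq> Qm X e" "card F1 = card F"
      "card (ushadow X F1) \<le> card (ushadow X F)" "sum (val n) F < sum (val n) F1"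
      using compression_step[OF X less.prems] by blast
    have "sum (val n) F1 \<le> sum (val n) (Qm X e)"
      by (rule sum_mono2[OF finite_Qm[OF X(1)] F1(1)]) simp
    then have "sum (val n) (Qm X e) - sum (val n) F1 < sum (val n) (Qm X e) - sum (val n) F"
      using F1(4) by linarith
    from less.hyps[OF this F1(1)] show ?thesis using F1(2,3) by (metis order_trans)
  qed
qed

text \<open>A family of degree-e sets that is compressed for every valid pair is an initial
  segment of the lexicographic order: any lex-larger set is obtained by a shift.\<close>

lemma lex_total: "finite S \<Longrightarrow> finite T \<Longrightarrow> S \<noteq> T \<Longrightarrow> lex_gt S T \<or> lex_gt T S"
proof -
  assume fin: "finite S" "finite T" and ne: "S \<noteq> T"
  let ?D = "(S - T) \<union> (T - S)"
  have "Min ?D \<in> ?D" using fin ne by (intro Min_in) auto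
  moreover have "(T - S) \<union> (S - T) = ?D" by auto
  ultimately show ?thesis unfolding lex_gt_def using ne by auto
qed

lemma compressed_initial:
  assumes all: "\<forall>U V. valid X U V \<longrightarrow> compressed U V F" and FQ: "F \<subseteq> Qm X e" and X: "finite X"
    and A: "A \<in> F" and B: "B \<in> Qm X e" and gt: "lex_gt B A"
  shows "B \<in> F"
proof -
  have AX: "A \<subseteq> X" "card A = e" using A FQ by (auto simp: Qm_def)
  have BX: "B \<subseteq> X" "card B = e" using B by (auto simp: Qm_def)
  have fin: "finite A" "finite B" using AX BX X finite_subset by auto
  have card_eq: "card (B - A) = card (A - B)"
    using fin AX BX by (metis Int_commute card_Diff_subset_Int finite_Int)
  have ne: "B - A \<noteq> {}"
  proof
    assume "B - A = {}"
    then have "B = A" using card_subset_eq[OF fin(1)] AX BX by auto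
    then show False using gt by (simp add: lex_gt_def)
  qed
  have "Min ((B - A) \<union> (A - B)) \<in> (B - A) \<union> (A - B)" using fin ne by (intro Min_in) auto
  then have "Min ((B - A) \<union> (A - B)) \<in> B - A" using gt by (auto simp: lex_gt_def)
  then have "valid X (B - A) (A - B)" unfolding valid_def using AX BX card_eq ne by auto
  then have "sh (B - A) (A - B) A \<in> F" using all A by (simp add: compressed_def)
  moreover have "sh (B - A) (A - B) A = B" by (auto simp: sh_def)
  ultimately show ?thesis by simp
qed

lemma initial_lex_seg:
  assumes FQ: "F \<subseteq> Qmons n i e"
    and init: "\<And>A B. A \<in> F \<Longrightarrow> B \<in> Qmons n i e \<Longrightarrow> lex_gt B A \<Longrightarrow> B \<in> F"
  shows "lex_seg n i e (card F) = F"
proof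
  have finF: "finite F" using FQ finite_Qmons finite_subset by blast
  show "lex_seg n i e (card F) \<subseteq> F"
  proof
    fix S assume S: "S \<in> lex_seg n i e (card F)"
    then have SQ: "S \<in> Qmons n i e" by (simp add: lex_seg_def)
    show "S \<in> F"
    proof (rule ccontr)
      assume SF: "S \<notin> F"
      have "F \<subseteq> {T \<in> Qmons n i e. lex_gt T S}"
      proof
        fix T assume T: "T \<in> F"
        then have "T \<in> Qmons n i e" "T \<noteq> S" using FQ SF by auto
        moreover have "finite T" "finite S" using \<open>T \<in> Qmons n i e\<close> SQ finite_subset
          by (auto simp: Qmons_def)
        moreover have "\<not> lex_gt S T" using init[OF T SQ] SF by blast
        ultimately show "T \<in> {T \<in> Qmons n i e. lex_gt T S}" using lex_total by blast
      qed
      then have "card F \<le> card {T \<in> Qmons n i e. lex_gt T S}"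
        by (rule card_mono[rotated]) (use finite_Qmons in auto)
      then show False using S by (simp add: lex_seg_def)
    qed
  qed
  show "F \<subseteq> lex_seg n i e (card F)"
  proof
    fix S assume S: "S \<in> F"
    have "{T \<in> Qmons n i e. lex_gt T S} \<subseteq> F - {S}"
      using init[OF S] by (auto simp: lex_gt_def)
    then have "card {T \<in> Qmons n i e. lex_gt T S} \<le> card (F - {S})"
      by (rule card_mono[rotated]) (use finF in auto)
    also have "\<dots> < card F" using card_Diff1_less[OF finF S] .
    finally show "S \<in> lex_seg n i e (card F)" using S FQ by (auto simp: lex_seg_def)
  qed
qed

theorem lex_seg_kruskal_katona:
  assumes F: "F \<subseteq> Qmons n i e"
  shows "card (lex_seg n i e (card F)) = card F"
    and "card (ushadow ({1..n} - {i}) (lex_seg n i e (card F))) \<le> card (ushadow ({1..n} - {i}) F)"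
proof -
  let ?X = "{1..n} - {i}"
  have Q: "Qmons n i e = Qm ?X e" by (simp add: Qmons_def Qm_def)
  have X: "finite ?X" "?X \<subseteq> {..n}" by auto
  obtain F' where F': "F' \<subseteq> Qm ?X e" "card F' = card F" "card (ushadow ?X F') \<le> card (ushadow ?X F)"
    "\<forall>U V. valid ?X U V \<longrightarrow> compressed U V F'"
    using compressed_family_exists[OF X] F Q by metis
  have "lex_seg n i e (card F') = F'"
    by (rule initial_lex_seg) (use F' Q compressed_initial[OF F'(4) F'(1)] in auto)
  then show "card (lex_seg n i e (card F)) = card F"
    and "card (ushadow ?X (lex_seg n i e (card F))) \<le> card (ushadow ?X F)"
    using F' by simp_all
qed


section \<open>The x_i-decomposition and the x_i-compression\<close>

text \<open>The index-set versions of V_0 and V_1 in V = V_0 \<oplus> x_i V_1.\<close>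

definition dec0 :: "nat \<Rightarrow> nat set set \<Rightarrow> nat set set" where
  "dec0 i M = {S \<in> M. i \<notin> S}"

definition dec1 :: "nat \<Rightarrow> nat set set \<Rightarrow> nat set set" where
  "dec1 i M = {S - {i} | S. S \<in> M \<and> i \<in> S}"

lemma finite_member:
  fixes M :: "nat set set"
  assumes "M \<subseteq> {S. S \<subseteq> {1..n} \<and> card S = d}" "S \<in> M"
  shows "finite S"
proof -
  have "S \<subseteq> {1..n}" using assms by auto
  then show ?thesis by (rule finite_subset) simp
qed

lemma decomposition:
  assumes M: "M \<subseteq> {S. S \<subseteq> {1..n} \<and> card S = d}"
  shows "M = dec0 i M \<union> insert i ` dec1 i M"
    and "dec0 i M \<subseteq> Qmons n i d"
    and "dec1 i M \<subseteq> Qmons n i (d - 1)"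
proof -
  show "M = dec0 i M \<union> insert i ` dec1 i M"
  proof
    show "M \<subseteq> dec0 i M \<union> insert i ` dec1 i M"
    proof
      fix S assume S: "S \<in> M"
      show "S \<in> dec0 i M \<union> insert i ` dec1 i M"
      proof (cases "i \<in> S")
        case True
        then have "S - {i} \<in> dec1 i M" "S = insert i (S - {i})" using S by (auto simp: dec1_def)
        then show ?thesis by blast
      next
        case False
        then show ?thesis using S by (simp add: dec0_def)
      qed
    qed
    show "dec0 i M \<union> insert i ` dec1 i M \<subseteq> M" by (auto simp: dec0_def dec1_def insert_absorb)
  qed
  show "dec0 i M \<subseteq> Qmons n i d" using M by (auto simp: dec0_def Qmons_def)
  show "dec1 i M \<subseteq> Qmons n i (d - 1)"
  proof
    fix T assume "T \<in> dec1 i M"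
    then obtain S where S: "S \<in> M" "i \<in> S" "T = S - {i}" by (auto simp: dec1_def)
    moreover have "finite S" using M S(1) by (rule finite_member)
    ultimately show "T \<in> Qmons n i (d - 1)" using M by (auto simp: Qmons_def)
  qed
qed

text \<open>The index-set version of the x_i-compression L = L_0 \<oplus> x_i L_1.\<close>

definition compression :: "nat \<Rightarrow> nat \<Rightarrow> nat \<Rightarrow> nat set set \<Rightarrow> nat set set" where
  "compression n i d M = lex_seg n i d (card (dec0 i M)) \<union> insert i ` lex_seg n i (d - 1) (card (dec1 i M))"

text \<open>The compression of M is again a family of degree-d sets of the same size, so it
  competes with M in the Gotzmann property.\<close>

lemma compression_degree:
  assumes i: "i \<in> {1..n}" and M: "M \<subseteq> {S. S \<subseteq> {1..n} \<and> card S = d}"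
  shows "compression n i d M \<subseteq> {S. S \<subseteq> {1..n} \<and> card S = d}"
proof
  let ?L0 = "lex_seg n i d (card (dec0 i M))" and ?L1 = "lex_seg n i (d - 1) (card (dec1 i M))"
  fix S assume "S \<in> compression n i d M"
  then consider "S \<in> ?L0" | T where "T \<in> ?L1" "S = insert i T" by (auto simp: compression_def)
  then show "S \<in> {S. S \<subseteq> {1..n} \<and> card S = d}"
  proof cases
    case 1 then show ?thesis by (auto simp: lex_seg_def Qmons_def)
  next
    case (2 T)
    then have T: "T \<subseteq> {1..n} - {i}" "card T = d - 1" by (auto simp: lex_seg_def Qmons_def)
    (* L_1 is nonempty, hence so is V_1: M has a member containing i, so d \<ge> 1 *)
    have "finite ?L1" by (rule finite_subset[OF _ finite_Qmons]) (auto simp: lex_seg_def)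
    then have "card ?L1 \<noteq> 0" using 2(1) by auto
    then have "dec1 i M \<noteq> {}"
      using lex_seg_kruskal_katona(1)[OF decomposition(3)[OF M]] by auto
    then obtain S' where S': "S' \<in> M" "i \<in> S'" by (auto simp: dec1_def)
    have "finite S'" using M S'(1) by (rule finite_member)
    then have "card S' \<noteq> 0" using S'(2) by auto
    moreover have "card S' = d" using M S'(1) by auto
    moreover have "finite T" using T(1) by (rule finite_subset) simp
    moreover have "i \<notin> T" using T(1) by auto
    ultimately show ?thesis using 2 T i by auto
  qed
qed

lemma card_compression:
  assumes M: "M \<subseteq> {S. S \<subseteq> {1..n} \<and> card S = d}"
  shows "card (compression n i d M) = card M"
proof -
  let ?L0 = "lex_seg n i d (card (dec0 i M))" and ?L1 = "lex_seg n i (d - 1) (card (dec1 i M))"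
  have L: "?L0 \<subseteq> Qmons n i d" "?L1 \<subseteq> Qmons n i (d - 1)" by (auto simp: lex_seg_def)
  have V: "dec0 i M \<subseteq> Qmons n i d" "dec1 i M \<subseteq> Qmons n i (d - 1)"
    using decomposition(2,3)[OF M] by blast+
  have fin: "finite ?L0" "finite ?L1" "finite (dec0 i M)" "finite (dec1 i M)"
    using L V by (auto intro: finite_subset[OF _ finite_Qmons])
  have no_i: "\<forall>S\<in>?L0. i \<notin> S" "\<forall>S\<in>?L1. i \<notin> S" "\<forall>S\<in>dec0 i M. i \<notin> S" "\<forall>S\<in>dec1 i M. i \<notin> S"
    using L V by (auto simp: Qmons_def)
  have "card (compression n i d M) = card ?L0 + card ?L1"
    unfolding compression_def by (rule card_union_insert_image[OF fin(1,2) no_i(1,2)])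
  also have "\<dots> = card (dec0 i M) + card (dec1 i M)"
    using lex_seg_kruskal_katona(1) V by simp
  also have "\<dots> = card M"
    using card_union_insert_image[OF fin(3,4) no_i(3,4)] decomposition(1)[OF M] by simp
  finally show ?thesis .
qed


text \<open>The Gotzmann property, the splitting formula for both families,
  shadow L_1 \<subseteq> L_0 and Kruskal-Katona for L_0 give |V_0 \<union> shadow V_1| \<le> |V_0|.\<close>

lemma gotzmann_shadow_absorbed:
  fixes M :: "nat set set"
  assumes i: "i \<in> {1..n}" and M: "M \<subseteq> {S. S \<subseteq> {1..n} \<and> card S = d}"
    and gotz: "gotzmann n d (spn (monom ` M) :: (nat set \<Rightarrow> 'k::field) set)"
    and L1_L0: "ushadow ({1..n} - {i}) (lex_seg n i (d - 1) (card (dec1 i M)))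
                  \<subseteq> lex_seg n i d (card (dec0 i M))"
  shows "ushadow ({1..n} - {i}) (dec1 i M) \<subseteq> dec0 i M"
proof -
  let ?X = "{1..n} - {i}" and ?V0 = "dec0 i M" and ?V1 = "dec1 i M"
  let ?L0 = "lex_seg n i d (card ?V0)" and ?L1 = "lex_seg n i (d - 1) (card ?V1)"
  have X: "finite ?X" "i \<notin> ?X" "insert i ?X = {1..n}" using i by auto
  have V: "?V0 \<subseteq> Qmons n i d" "?V1 \<subseteq> Qmons n i (d - 1)" using decomposition(2,3)[OF M] by blast+
  have L: "?L0 \<subseteq> Qmons n i d" "?L1 \<subseteq> Qmons n i (d - 1)" by (auto simp: lex_seg_def)
  have Pow: "Qmons n i e \<subseteq> Pow ?X" for e by (auto simp: Qmons_def)
  note split = card_ushadow_split[OF X(1,2) subset_trans[OF _ Pow] subset_trans[OF _ Pow], unfolded X(3)]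
  have "card (ushadow ?X ?V0) + card (?V0 \<union> ushadow ?X ?V1) = card (ushadow {1..n} M)"
    using split[OF V] decomposition(1)[OF M, symmetric] by simp
  also have "\<dots> \<le> card (ushadow {1..n} (compression n i d M))"
    using gotzmann_ushadow[OF gotz M compression_degree[OF i M] card_compression[OF M]] .
  also have "\<dots> = card (ushadow ?X ?L0) + card (?L0 \<union> ushadow ?X ?L1)"
    unfolding compression_def by (rule split[OF L])
  also have "?L0 \<union> ushadow ?X ?L1 = ?L0" using L1_L0 by blast
  finally have "card (?V0 \<union> ushadow ?X ?V1) \<le> card ?V0"
    using lex_seg_kruskal_katona[OF V(1)] by linarith
  moreover have "finite (?V0 \<union> ushadow ?X ?V1)"
    using finite_subset[OF subset_trans[OF V(1) Pow]] finite_ushadow[OF X(1) subset_trans[OF V(2) Pow]] X(1)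
    by simp
  ultimately show ?thesis using card_seteq[of "?V0 \<union> ushadow ?X ?V1" ?V0] by blast
qed

text \<open>The statement: for x_i m \<in> V and x_j not dividing m, x_j m is in the upper
  shadow of V_1, hence in V_0 \<subseteq> V.\<close>

theorem lemma4p7:
  fixes n d i :: nat and M :: "nat set set"
  assumes i: "i \<in> {1..n}"
    and M: "M \<subseteq> {S. S \<subseteq> {1..n} \<and> card S = d}"
    and gotz: "gotzmann n d (spn (monom ` M) :: (nat set \<Rightarrow> 'k::field) set)"
    and n1: "spn {mulvar j (monom T) | j T. j \<in> {1..n} \<and> j \<noteq> i \<and>
                   T \<in> lex_seg n i (d - 1) (card {S - {i} | S. S \<in> M \<and> i \<in> S})}
             \<subseteq> spn (monom ` lex_seg n i d (card {S \<in> M. i \<notin> S}) :: (nat set \<Rightarrow> 'k) set)"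
  shows "\<forall>S j. monom S \<in> (spn (monom ` M) :: (nat set \<Rightarrow> 'k) set) \<and> i \<in> S \<and>
           j \<in> {1..n} \<and> j \<notin> S \<longrightarrow>
           monom (insert j (S - {i})) \<in> (spn (monom ` M) :: (nat set \<Rightarrow> 'k) set)"
proof (intro allI impI)
  fix S j
  assume "monom S \<in> (spn (monom ` M) :: (nat set \<Rightarrow> 'k) set) \<and> i \<in> S \<and> j \<in> {1..n} \<and> j \<notin> S"
  then have S: "S \<in> M" "i \<in> S" and j: "j \<in> {1..n} - {i}" "j \<notin> S - {i}"
    by (auto simp: monom_in_spn)
  have absorbed: "ushadow ({1..n} - {i}) (dec1 i M) \<subseteq> dec0 i M"
    using gotzmann_shadow_absorbed[OF i M gotz] n1_ushadow[OF n1] by (simp add: dec0_def dec1_def)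
  have "S - {i} \<in> dec1 i M" using S by (auto simp: dec1_def)
  then have "insert j (S - {i}) \<in> dec0 i M" using ushadow_memI[OF _ j] absorbed by blast
  then show "monom (insert j (S - {i})) \<in> (spn (monom ` M) :: (nat set \<Rightarrow> 'k) set)"
    by (simp add: monom_in_spn dec0_def)
qed

end
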